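(* Let $S$ be a finite set of states and $N=I=\{1,\ldots,n\}$ a set of individuals, and let $p_1,\ldots,p_n\in\Delta(S)$ be individual beliefs. A profile $(\rho_1,\ldots,\rho_n)\in\Delta(S)^n$ is a (pure-strategy) Nash equilibrium of the log utility preference revelation game $(\Delta(S),U_{p_i})_{i\in N}$ if and only if there is a parimutuel equilibrium with equal wealth $(\rho,\mathbf{x})$ of the parimutuel market $(\mathbb{R}^S_+,p_i)_{i\in N}$ such that \[\rho_{is}=\frac{\rho_s x_{is}}{\sum_{s'\in S}\rho_{s'}x_{is'}}\quad\text{for all } i\in N,\ s\in S.\] In particular, in that case $\frac{1}{n}\sum_{i=1}^n\rho_i=\rho$.
   Context: $\Delta(S)$ is the set of probability distributions on $S$. The log utility preference revelation game for the profile $(p_1,\ldots,p_n)$ is the normal-form game in which each player $i\in N$ has strategy space $\Delta(S)$ and payoff function \[U_{p_i}(\rho_1,\ldots,\rho_n)=\sum_{s\in S}p_{i,s}\log\Big(\frac{1}{n}\sum_{j=1}^n\rho_{j,s}\Big),\] with the convention $0\times\log 0=0$ (payoffs may equal $-\infty$). (This is the payoff obtained when society aggregates reported beliefs by the symmetric linear opinion pool $f(\rho_1,\ldots,\rho_n)=\frac1n\sum_j\rho_j$ and then chooses the portfolio maximizing expected log utility over $\{x\in\mathbb{R}^S_+:\sum_s x_s=1\}$, whose optimum is $x=f(\rho)$.) The parimutuel market $(\mathbb{R}^S_+,p_i)_{i\in N}$ consists of consumers $i\in N$, each with consumption set $\mathbb{R}^S_+$ and linear utility $x\mapsto p_i\cdot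 x$. A parimutuel equilibrium with equal wealth is a pair $(\rho,\mathbf{x})$ with $\rho\in\Delta(S)$ (a price vector) and $\mathbf{x}=(x_1,\ldots,x_n)\in(\mathbb{R}^S_+)^N$ such that (1) for each $i$, $\rho\cdot x_i\le 1/n$ and $p_i\cdot x_i\ge p_i\cdot y$ for every $y\in\mathbb{R}^S_+$ with $\rho\cdot y\le 1/n$; and (2) $\sum_{i=1}^n x_i=(1,\ldots,1)$. *)

theory Defs
  imports "HOL-Analysis.Analysis" "HOL-Library.Extended_Real"
begin

definition distr_set :: "('a::finite \<Rightarrow> real) set" where
  "distr_set = {q. (\<forall>s. 0 \<le> q s) \<and> (\<Sum>s\<in>UNIV. q s) = 1}"

definition plogq :: "real \<Rightarrow> real \<Rightarrow> ereal" where
  "plogq p q = (if p = 0 then 0 else if q = 0 then -\<infinity> else ereal (p * ln q))"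

definition pool :: "nat \<Rightarrow> (nat \<Rightarrow> 'a \<Rightarrow> real) \<Rightarrow> 'a \<Rightarrow> real" where
  "pool n \<rho>s s = (1 / real n) * (\<Sum>j\<in>{1..n}. \<rho>s j s)"

definition log_payoff :: "nat \<Rightarrow> ('a::finite \<Rightarrow> real) \<Rightarrow> (nat \<Rightarrow> 'a \<Rightarrow> real) \<Rightarrow> ereal" where
  "log_payoff n q \<rho>s = (\<Sum>s\<in>UNIV. plogq (q s) (pool n \<rho>s s))"

definition nash_eq :: "nat \<Rightarrow> (nat \<Rightarrow> 'a::finite \<Rightarrow> real) \<Rightarrow> (nat \<Rightarrow> 'a \<Rightarrow> real) \<Rightarrow> bool" where
  "nash_eq n p \<rho>s \<longleftrightarrow>
     (\<forall>i\<in>{1..n}. \<rho>s i \<in> distr_set) \<and>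
     (\<forall>i\<in>{1..n}. \<forall>\<sigma>\<in>distr_set. log_payoff n (p i) (\<rho>s(i := \<sigma>)) \<le> log_payoff n (p i) \<rho>s)"

definition dotp :: "('a::finite \<Rightarrow> real) \<Rightarrow> ('a \<Rightarrow> real) \<Rightarrow> real" where
  "dotp u v = (\<Sum>s\<in>UNIV. u s * v s)"

definition parimutuel_eq :: "nat \<Rightarrow> (nat \<Rightarrow> 'a::finite \<Rightarrow> real) \<Rightarrow> ('a \<Rightarrow> real) \<Rightarrow> (nat \<Rightarrow> 'a \<Rightarrow> real) \<Rightarrow> bool" where
  "parimutuel_eq n p \<rho> x \<longleftrightarrow>
     \<rho> \<in> distr_set \<and>
     (\<forall>i\<in>{1..n}. (\<forall>s. 0 \<le> x i s) \<and> dotp \<rho> (x i) \<le> 1 / real n \<and>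
        (\<forall>y. (\<forall>s. 0 \<le> y s) \<and> dotp \<rho> y \<le> 1 / real n \<longrightarrow> dotp (p i) y \<le> dotp (p i) (x i))) \<and>
     (\<forall>s. (\<Sum>i\<in>{1..n}. x i s) = 1)"

end

theory Submission
  imports Defs
begin

(* For fixed reports of the others, player i's payoff is concave in her own report rho_i, so rho_i
   is a best response iff the Kuhn-Tucker conditions hold: with r the pooled report,
   p_i t <= lambda_i * r t for every state t, where lambda_i = sum_s p_i s * rho_i s / r s.
   In the parimutuel market at prices r, a consumer with linear utility p_i and wealth 1/n demands
   optimally iff p_i t <= n * (p_i . x_i) * r t. Reading rho_i s / n as the money i spends on
   state s, i.e. x_i s = rho_i s / (n * r s), turns the first condition into the second with
   lambda_i = n * (p_i . x_i). Conversely, in a parimutuel equilibrium every budget binds, and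
   market clearing forces the pool of the reports to be the price vector. *)

lemma plogq_le_tangent:
  assumes "0 \<le> p" "0 \<le> q" "p \<noteq> 0 \<Longrightarrow> 0 < a"
  shows "plogq p q \<le> ereal (p * ln a + p * (q - a) / a)"
proof (cases "p = 0 \<or> q = 0")
  case True
  then show ?thesis by (auto simp: plogq_def)
next
  case False
  with assms have a: "0 < a" and q: "0 < q" by auto
  have "ln (q / a) \<le> q / a - 1"
    using a q by (intro ln_le_minus_one) simp
  then have "ln q \<le> ln a + (q - a) / a"
    using a q by (simp add: ln_div diff_divide_distrib)
  then have "p * ln q \<le> p * (ln a + (q - a) / a)"
    using assms(1) by (rule mult_left_mono)
  with False show ?thesis by (simp add: plogq_def algebra_simps)
qed

lemma log_payoff_eq_ereal:
  assumes "\<And>s. q s \<noteq> 0 \<Longrightarrow> 0 < pool n \<rho>s s"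
  shows "log_payoff n q \<rho>s = ereal (\<Sum>s\<in>UNIV. q s * ln (pool n \<rho>s s))"
proof -
  have "log_payoff n q \<rho>s = (\<Sum>s\<in>UNIV. ereal (q s * ln (pool n \<rho>s s)))"
    unfolding log_payoff_def using assms by (intro sum.cong refl) (fastforce simp: plogq_def)
  then show ?thesis by simp
qed

lemma log_payoff_eq_MInfty:
  assumes "q t \<noteq> 0" "pool n \<rho>s t = 0"
  shows "log_payoff n q \<rho>s = -\<infinity>"
proof -
  have "log_payoff n q \<rho>s = plogq (q t) (pool n \<rho>s t) + (\<Sum>s\<in>UNIV-{t}. plogq (q s) (pool n \<rho>s s))"
    unfolding log_payoff_def by (rule sum.remove) auto
  moreover have "(\<Sum>s\<in>UNIV-{t}. plogq (q s) (pool n \<rho>s s)) \<noteq> \<infinity>"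
    by (simp add: sum_Pinfty plogq_def)
  ultimately show ?thesis
    using assms by (simp add: plogq_def)
qed

lemma pool_fun_upd:
  assumes "i \<in> {1..n}"
  shows "pool n (\<rho>s(i := \<sigma>)) s = pool n \<rho>s s + (\<sigma> s - \<rho>s i s) / real n"
proof -
  have "(\<Sum>j\<in>{1..n}. (\<rho>s(i := \<sigma>)) j s) = \<sigma> s + (\<Sum>j\<in>{1..n}-{i}. \<rho>s j s)"
    using assms by (subst sum.remove[of _ i]) auto
  also have "\<dots> = \<sigma> s - \<rho>s i s + (\<Sum>j\<in>{1..n}. \<rho>s j s)"
    using assms by (subst (2) sum.remove[of _ i]) auto
  finally have "(\<Sum>j\<in>{1..n}. (\<rho>s(i := \<sigma>)) j s) = \<sigma> s - \<rho>s i s + (\<Sum>j\<in>{1..n}. \<rho>s j s)" .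
  then show ?thesis
    unfolding pool_def by (simp only:) (simp add: field_split_simps)
qed

lemma pool_ge:
  assumes "i \<in> {1..n}" "\<forall>j\<in>{1..n}. \<rho>s j \<in> distr_set"
  shows "\<rho>s i s / real n \<le> pool n \<rho>s s"
proof -
  have "\<rho>s i s \<le> (\<Sum>j\<in>{1..n}. \<rho>s j s)"
    using assms by (intro member_le_sum) (auto simp: distr_set_def)
  then show ?thesis
    unfolding pool_def by (simp add: divide_right_mono)
qed

lemma pool_in_distr_set:
  assumes "1 \<le> n" "\<forall>j\<in>{1..n}. \<rho>s j \<in> distr_set"
  shows "pool n \<rho>s \<in> distr_set"
proof -
  have "(\<Sum>s\<in>UNIV. \<Sum>j\<in>{1..n}. \<rho>s j s) = (\<Sum>j\<in>{1..n}. \<Sum>s\<in>UNIV. \<rho>s j s)"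
    by (rule sum.swap)
  also have "\<dots> = real n"
    using assms(2) by (simp add: distr_set_def)
  finally show ?thesis
    using assms unfolding distr_set_def pool_def
    by (auto simp: sum_divide_distrib[symmetric] intro!: sum_nonneg divide_nonneg_nonneg)
qed

lemma has_real_derivative_sum_ln_line:
  assumes "\<And>s. s \<in> A \<Longrightarrow> q s \<noteq> 0 \<Longrightarrow> 0 < r s"
  shows "((\<lambda>h. \<Sum>s\<in>A. q s * ln (r s + h * c s)) has_real_derivative (\<Sum>s\<in>A. q s * c s / r s)) (at 0)"
proof (rule DERIV_sum)
  fix s assume "s \<in> A"
  with assms show "((\<lambda>h. q s * ln (r s + h * c s)) has_real_derivative q s * c s / r s) (at 0)"
    by (cases "q s = 0") (auto intro!: derivative_eq_intros simp: field_simps)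
qed

lemma distr_set_mix:
  assumes "\<sigma> \<in> distr_set" "\<tau> \<in> distr_set" "0 \<le> h" "h \<le> 1"
  shows "(\<lambda>s. (1 - h) * \<sigma> s + h * \<tau> s) \<in> distr_set"
  using assms unfolding distr_set_def
  by (auto simp: sum.distrib sum_distrib_left[symmetric] intro!: add_nonneg_nonneg mult_nonneg_nonneg)

lemma pool_fun_upd_mix_ge:
  assumes i: "i \<in> {1..n}" and \<rho>s: "\<forall>j\<in>{1..n}. \<rho>s j \<in> distr_set" and \<tau>: "\<tau> \<in> distr_set"
    and h: "0 \<le> h"
  shows "(1 - h) * pool n \<rho>s s \<le> pool n (\<rho>s(i := (\<lambda>s. (1 - h) * \<rho>s i s + h * \<tau> s))) s"
proof -
  have "h * (\<rho>s i s / real n) \<le> h * pool n \<rho>s s"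
    using h pool_ge[OF i \<rho>s] by (intro mult_left_mono) auto
  moreover have "0 \<le> h * (\<tau> s / real n)"
    using h \<tau> by (simp add: distr_set_def)
  ultimately show ?thesis
    unfolding pool_fun_upd[OF i] by (simp add: algebra_simps diff_divide_distrib)
qed

definition best_response :: "nat \<Rightarrow> ('a::finite \<Rightarrow> real) \<Rightarrow> (nat \<Rightarrow> 'a \<Rightarrow> real) \<Rightarrow> nat \<Rightarrow> bool" where
  "best_response n q \<rho>s i \<longleftrightarrow> (\<forall>\<sigma>\<in>distr_set. log_payoff n q (\<rho>s(i := \<sigma>)) \<le> log_payoff n q \<rho>s)"

text \<open>Lagrange multiplier (scaled by \<open>n\<close>) of the constraint \<open>\<Sum>s. \<sigma> s = 1\<close> in the best-response
  problem of a player with belief \<open>q\<close> and report \<open>\<rho>s i\<close>. Where the pool vanishes so does \<open>\<rho>s i\<close>,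
  so the convention \<open>x / 0 = 0\<close> is harmless.\<close>
definition kkt_multiplier :: "nat \<Rightarrow> ('a::finite \<Rightarrow> real) \<Rightarrow> (nat \<Rightarrow> 'a \<Rightarrow> real) \<Rightarrow> nat \<Rightarrow> real" where
  "kkt_multiplier n q \<rho>s i = (\<Sum>s\<in>UNIV. q s * \<rho>s i s / pool n \<rho>s s)"

lemma kkt_multiplier_nonneg:
  assumes "i \<in> {1..n}" "\<forall>j\<in>{1..n}. \<rho>s j \<in> distr_set" "q \<in> distr_set"
  shows "0 \<le> kkt_multiplier n q \<rho>s i"
proof -
  have "pool n \<rho>s \<in> distr_set"
    using assms by (intro pool_in_distr_set) auto
  with assms show ?thesis
    unfolding kkt_multiplier_def distr_set_def
    by (intro sum_nonneg divide_nonneg_nonneg mult_nonneg_nonneg) auto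
qed

lemma best_response_support:
  assumes i: "i \<in> {1..n}" and \<rho>s: "\<forall>j\<in>{1..n}. \<rho>s j \<in> distr_set" and q: "q \<in> distr_set"
    and br: "best_response n q \<rho>s i" and "q t \<noteq> 0"
  shows "0 < pool n \<rho>s t"
proof (rule ccontr)
  assume "\<not> 0 < pool n \<rho>s t"
  moreover have "pool n \<rho>s \<in> distr_set"
    using i \<rho>s by (intro pool_in_distr_set) auto
  ultimately have "pool n \<rho>s t = 0"
    by (simp add: distr_set_def less_le)
  then have payoff_MInfty: "log_payoff n q \<rho>s = -\<infinity>"
    using log_payoff_eq_MInfty[of q t] \<open>q t \<noteq> 0\<close> by blast
  have \<rho>s': "\<forall>j\<in>{1..n}. (\<rho>s(i := q)) j \<in> distr_set"
    using \<rho>s q by simp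
  have "0 < pool n (\<rho>s(i := q)) s" if "q s \<noteq> 0" for s
  proof -
    have "0 < q s"
      using that q by (simp add: distr_set_def less_le)
    then have "0 < q s / real n"
      using i by simp
    also have "\<dots> \<le> pool n (\<rho>s(i := q)) s"
      using pool_ge[OF i \<rho>s', of s] by (simp only: fun_upd_same)
    finally show ?thesis .
  qed
  then have "log_payoff n q (\<rho>s(i := q)) \<noteq> -\<infinity>"
    by (simp add: log_payoff_eq_ereal)
  with payoff_MInfty br q show False
    unfolding best_response_def by force
qed

text \<open>The derivative of player \<open>i\<close>'s payoff along the segment from \<open>\<rho>s i\<close> to \<open>\<tau>\<close> is nonpositive.\<close>
lemma best_response_no_ascent:
  assumes i: "i \<in> {1..n}" and \<rho>s: "\<forall>j\<in>{1..n}. \<rho>s j \<in> distr_set" and q: "q \<in> distr_set"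
    and br: "best_response n q \<rho>s i" and \<tau>: "\<tau> \<in> distr_set"
  shows "(\<Sum>s\<in>UNIV. q s * \<tau> s / pool n \<rho>s s) \<le> kkt_multiplier n q \<rho>s i"
proof (rule ccontr)
  define r where "r = pool n \<rho>s"
  define c where "c s = (\<tau> s - \<rho>s i s) / real n" for s
  define f where "f h = (\<Sum>s\<in>UNIV. q s * ln (r s + h * c s))" for h
  have support: "\<And>s. q s \<noteq> 0 \<Longrightarrow> 0 < r s"
    unfolding r_def using best_response_support[OF i \<rho>s q br] .
  assume "\<not> ?thesis"
  moreover have "q s * c s / r s = (q s * \<tau> s / r s - q s * \<rho>s i s / r s) / real n" for s
    by (simp add: c_def diff_divide_distrib right_diff_distrib mult.commute)
  then have "(\<Sum>s\<in>UNIV. q s * c s / r s)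
      = ((\<Sum>s\<in>UNIV. q s * \<tau> s / r s) - kkt_multiplier n q \<rho>s i) / real n"
    by (simp add: kkt_multiplier_def r_def sum_divide_distrib[symmetric] sum_subtractf)
  ultimately have slope: "0 < (\<Sum>s\<in>UNIV. q s * c s / r s)"
    using i by (simp add: r_def)
  have "(f has_real_derivative (\<Sum>s\<in>UNIV. q s * c s / r s)) (at 0)"
    unfolding f_def using support by (intro has_real_derivative_sum_ln_line)
  from DERIV_pos_inc_right[OF this slope]
  obtain d where "0 < d" and d: "\<forall>h>0. h < d \<longrightarrow> f 0 < f (0 + h)"
    by blast
  define h where "h = min (d / 2) (1 / 2)"
  have h: "0 < h" "h < 1" and "f 0 < f h"
    using \<open>0 < d\<close> d by (auto simp: h_def)
  define \<sigma> where "\<sigma> s = (1 - h) * \<rho>s i s + h * \<tau> s" for s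
  have \<sigma>: "\<sigma> \<in> distr_set"
    unfolding \<sigma>_def using \<rho>s i \<tau> h by (intro distr_set_mix) auto
  have pool_\<sigma>: "pool n (\<rho>s(i := \<sigma>)) s = r s + h * c s" for s
    using pool_fun_upd[OF i, of \<rho>s \<sigma> s] by (simp add: r_def \<sigma>_def c_def field_simps)
  have "0 < pool n (\<rho>s(i := \<sigma>)) s" if "q s \<noteq> 0" for s
  proof -
    have "0 < (1 - h) * r s"
      using h support[OF that] by simp
    also have "\<dots> \<le> pool n (\<rho>s(i := \<sigma>)) s"
      unfolding r_def \<sigma>_def using i \<rho>s \<tau> h by (intro pool_fun_upd_mix_ge) auto
    finally show ?thesis .
  qed
  then have "log_payoff n q (\<rho>s(i := \<sigma>)) = ereal (f h)"
    by (simp add: log_payoff_eq_ereal pool_\<sigma> f_def)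
  moreover have "log_payoff n q \<rho>s = ereal (f 0)"
    using support by (simp add: log_payoff_eq_ereal f_def r_def)
  ultimately show False
    using br \<sigma> \<open>f 0 < f h\<close> unfolding best_response_def by force
qed

lemma kkt_of_best_response:
  assumes i: "i \<in> {1..n}" and \<rho>s: "\<forall>j\<in>{1..n}. \<rho>s j \<in> distr_set" and q: "q \<in> distr_set"
    and br: "best_response n q \<rho>s i"
  shows "q t \<le> kkt_multiplier n q \<rho>s i * pool n \<rho>s t"
proof (cases "q t = 0")
  case True
  have "pool n \<rho>s \<in> distr_set"
    using i \<rho>s by (intro pool_in_distr_set) auto
  with True kkt_multiplier_nonneg[OF i \<rho>s q] show ?thesis
    by (simp add: distr_set_def)
next
  case False
  define \<delta> where "\<delta> s = (if s = t then 1 else 0 :: real)" for s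
  have "\<delta> \<in> distr_set"
    by (simp add: distr_set_def \<delta>_def)
  from best_response_no_ascent[OF i \<rho>s q br this]
  have "q t / pool n \<rho>s t \<le> kkt_multiplier n q \<rho>s i"
    by (simp add: \<delta>_def if_distrib[of "\<lambda>x. q _ * x / _"] cong: if_cong)
  moreover have "0 < pool n \<rho>s t"
    using best_response_support[OF i \<rho>s q br False] .
  ultimately show ?thesis
    by (simp add: divide_le_eq)
qed

lemma kkt_support:
  assumes "\<forall>j\<in>{1..n}. \<rho>s j \<in> distr_set" "q \<in> distr_set" "1 \<le> n"
    and kkt: "\<And>t. q t \<le> kkt_multiplier n q \<rho>s i * pool n \<rho>s t" and "q s \<noteq> 0"
  shows "0 < pool n \<rho>s s"
proof -
  have "0 < q s"
    using assms by (simp add: distr_set_def less_le)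
  with kkt[of s] have "pool n \<rho>s s \<noteq> 0"
    by auto
  moreover have "pool n \<rho>s \<in> distr_set"
    using assms by (intro pool_in_distr_set)
  ultimately show ?thesis
    by (simp add: distr_set_def less_le)
qed

lemma kkt_no_ascent:
  assumes i: "i \<in> {1..n}" and \<rho>s: "\<forall>j\<in>{1..n}. \<rho>s j \<in> distr_set" and q: "q \<in> distr_set"
    and kkt: "\<And>t. q t \<le> kkt_multiplier n q \<rho>s i * pool n \<rho>s t" and \<sigma>: "\<sigma> \<in> distr_set"
  shows "(\<Sum>s\<in>UNIV. q s * \<sigma> s / pool n \<rho>s s) \<le> kkt_multiplier n q \<rho>s i"
proof -
  define r where "r = pool n \<rho>s"
  define K where "K = kkt_multiplier n q \<rho>s i"
  have r: "r \<in> distr_set"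
    unfolding r_def using i \<rho>s by (intro pool_in_distr_set) auto
  have K: "0 \<le> K"
    unfolding K_def using i \<rho>s q by (rule kkt_multiplier_nonneg)
  have "q s * \<sigma> s / r s \<le> K * \<sigma> s" for s
  proof (cases "r s = 0")
    case False
    with r have "0 < r s"
      by (simp add: distr_set_def less_le)
    with kkt[of s] have "q s / r s \<le> K"
      by (simp add: r_def K_def divide_le_eq mult.commute)
    then have "q s / r s * \<sigma> s \<le> K * \<sigma> s"
      using \<sigma> by (intro mult_right_mono) (simp_all add: distr_set_def)
    then show ?thesis
      by simp
  qed (use K \<sigma> in \<open>simp add: distr_set_def\<close>)
  then show ?thesis
    using sum_mono[of UNIV "\<lambda>s. q s * \<sigma> s / r s" "\<lambda>s. K * \<sigma> s"] \<sigma>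
    by (simp add: r_def K_def distr_set_def sum_distrib_left[symmetric])
qed

text \<open>The payoff is concave in the own report, so it lies below its tangent at \<open>\<rho>s i\<close>, and the
  Kuhn-Tucker conditions make the tangent's slope nonpositive in every feasible direction.\<close>
lemma best_response_of_kkt:
  assumes i: "i \<in> {1..n}" and \<rho>s: "\<forall>j\<in>{1..n}. \<rho>s j \<in> distr_set" and q: "q \<in> distr_set"
    and kkt: "\<And>t. q t \<le> kkt_multiplier n q \<rho>s i * pool n \<rho>s t"
  shows "best_response n q \<rho>s i"
  unfolding best_response_def
proof
  fix \<sigma> :: "'a \<Rightarrow> real"
  assume \<sigma>: "\<sigma> \<in> distr_set"
  define r where "r = pool n \<rho>s"
  have support: "\<And>s. q s \<noteq> 0 \<Longrightarrow> 0 < r s"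
    unfolding r_def using \<rho>s q i kkt by (intro kkt_support) auto
  have "pool n (\<rho>s(i := \<sigma>)) \<in> distr_set"
    using i \<rho>s \<sigma> by (intro pool_in_distr_set) auto
  then have "log_payoff n q (\<rho>s(i := \<sigma>))
      \<le> (\<Sum>s\<in>UNIV. ereal (q s * ln (r s) + q s * (pool n (\<rho>s(i := \<sigma>)) s - r s) / r s))"
    unfolding log_payoff_def using q support
    by (intro sum_mono plogq_le_tangent) (auto simp: distr_set_def)
  also have "\<dots> = ereal ((\<Sum>s\<in>UNIV. q s * ln (r s))
      + ((\<Sum>s\<in>UNIV. q s * \<sigma> s / r s) - kkt_multiplier n q \<rho>s i) / real n)"
  proof -
    have "q s * (pool n (\<rho>s(i := \<sigma>)) s - r s) / r s = (q s * \<sigma> s / r s - q s * \<rho>s i s / r s) / real n" for s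
      using pool_fun_upd[OF i, of \<rho>s \<sigma> s]
      by (simp add: r_def diff_divide_distrib right_diff_distrib mult.commute)
    then show ?thesis
      by (simp add: sum.distrib sum_subtractf sum_divide_distrib[symmetric] kkt_multiplier_def r_def)
  qed
  also have "\<dots> \<le> ereal (\<Sum>s\<in>UNIV. q s * ln (r s))"
    using kkt_no_ascent[OF i \<rho>s q kkt \<sigma>] by (simp add: r_def divide_le_0_iff)
  also have "\<dots> = log_payoff n q \<rho>s"
    using support by (simp add: log_payoff_eq_ereal r_def)
  finally show "log_payoff n q (\<rho>s(i := \<sigma>)) \<le> log_payoff n q \<rho>s" .
qed

lemma best_response_iff_kkt:
  assumes "i \<in> {1..n}" "\<forall>j\<in>{1..n}. \<rho>s j \<in> distr_set" "q \<in> distr_set"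
  shows "best_response n q \<rho>s i \<longleftrightarrow> (\<forall>t. q t \<le> kkt_multiplier n q \<rho>s i * pool n \<rho>s t)"
  using kkt_of_best_response[OF assms] best_response_of_kkt[OF assms] by blast

lemma nash_eq_iff_kkt:
  assumes "\<forall>i\<in>{1..n}. p i \<in> distr_set" "\<forall>i\<in>{1..n}. \<rho>s i \<in> distr_set"
  shows "nash_eq n p \<rho>s \<longleftrightarrow> (\<forall>i\<in>{1..n}. \<forall>t. p i t \<le> kkt_multiplier n (p i) \<rho>s i * pool n \<rho>s t)"
  using assms best_response_iff_kkt unfolding nash_eq_def best_response_def[symmetric] by blast

lemma dotp_delta_right: "dotp u (\<lambda>t. if t = s then c else 0) = u s * c"
  unfolding dotp_def by (simp add: if_distrib cong: if_cong)

definition optimal_demand :: "('a::finite \<Rightarrow> real) \<Rightarrow> ('a \<Rightarrow> real) \<Rightarrow> real \<Rightarrow> ('a \<Rightarrow> real) \<Rightarrow> bool" where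
  "optimal_demand u \<rho> b x \<longleftrightarrow> (\<forall>y. (\<forall>s. 0 \<le> y s) \<and> dotp \<rho> y \<le> b \<longrightarrow> dotp u y \<le> dotp u x)"

text \<open>Compare \<open>x\<close> with spending all the wealth on security \<open>s\<close>, or, if \<open>s\<close> is free, with
  taking an arbitrarily large amount of it.\<close>
lemma optimal_demand_price_bound:
  assumes opt: "optimal_demand u \<rho> b x" and \<rho>: "\<forall>s. 0 \<le> \<rho> s" and b: "0 < b"
  shows "u s * b \<le> dotp u x * \<rho> s"
proof (cases "\<rho> s = 0")
  case False
  with \<rho> have "0 < \<rho> s"
    by (simp add: less_le)
  with b opt have "u s * (b / \<rho> s) \<le> dotp u x"
    unfolding optimal_demand_def
    by (auto simp: dotp_delta_right dest: spec[of _ "\<lambda>t. if t = s then b / \<rho> s else 0"])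
  with \<open>0 < \<rho> s\<close> show ?thesis
    by (simp add: divide_le_eq mult.commute)
next
  case True
  have "u s \<le> 0"
  proof (rule ccontr)
    assume "\<not> u s \<le> 0"
    with True b opt have "\<bar>dotp u x\<bar> + 1 \<le> dotp u x"
      unfolding optimal_demand_def
      by (auto simp: dotp_delta_right dest: spec[of _ "\<lambda>t. if t = s then (\<bar>dotp u x\<bar> + 1) / u s else 0"])
    then show False
      by simp
  qed
  with True b show ?thesis
    by (simp add: mult_nonpos_nonneg)
qed

lemma optimal_demand_of_price_bound:
  assumes bound: "\<forall>s. u s * b \<le> dotp u x * \<rho> s" and ux: "0 \<le> dotp u x" and b: "0 < b"
  shows "optimal_demand u \<rho> b x"
  unfolding optimal_demand_def
proof (intro allI impI)
  fix y assume y: "(\<forall>s. 0 \<le> y s) \<and> dotp \<rho> y \<le> b"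
  have "dotp u y * b = (\<Sum>s\<in>UNIV. (u s * b) * y s)"
    unfolding dotp_def by (simp add: sum_distrib_left mult_ac)
  also have "\<dots> \<le> (\<Sum>s\<in>UNIV. (dotp u x * \<rho> s) * y s)"
    using bound y by (intro sum_mono mult_right_mono) auto
  also have "\<dots> = dotp u x * dotp \<rho> y"
    unfolding dotp_def[of \<rho> y] by (simp add: sum_distrib_left mult_ac)
  also have "\<dots> \<le> dotp u x * b"
    using ux y by (intro mult_left_mono) auto
  finally show "dotp u y \<le> dotp u x"
    using b by simp
qed

lemma parimutuel_eq_budget_binds:
  assumes pe: "parimutuel_eq n p \<rho> x" and n: "1 \<le> n" and i: "i \<in> {1..n}"
  shows "dotp \<rho> (x i) = 1 / real n"
proof -
  have \<rho>: "\<rho> \<in> distr_set" and budget: "\<forall>j\<in>{1..n}. dotp \<rho> (x j) \<le> 1 / real n"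
    and clearing: "\<forall>s. (\<Sum>j\<in>{1..n}. x j s) = 1"
    using pe unfolding parimutuel_eq_def by auto
  have "(\<Sum>j\<in>{1..n}. dotp \<rho> (x j)) = (\<Sum>s\<in>UNIV. \<rho> s * (\<Sum>j\<in>{1..n}. x j s))"
    unfolding dotp_def by (simp add: sum_distrib_left) (rule sum.swap)
  also have "\<dots> = 1"
    using clearing \<rho> by (simp add: distr_set_def)
  finally have "(\<Sum>j\<in>{1..n}. 1 / real n - dotp \<rho> (x j)) = 0"
    using n by (simp add: sum_subtractf)
  moreover have "\<forall>j\<in>{1..n}. 0 \<le> 1 / real n - dotp \<rho> (x j)"
    using budget by auto
  ultimately show ?thesis
    using sum_nonneg_eq_0_iff[of "{1..n}" "\<lambda>j. 1 / real n - dotp \<rho> (x j)"] i by auto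
qed

lemma parimutuel_eq_demand_bound:
  assumes pe: "parimutuel_eq n p \<rho> x" and n: "1 \<le> n" and i: "i \<in> {1..n}" and p: "p i \<in> distr_set"
  shows "p i s \<le> real n * dotp (p i) (x i) * \<rho> s"
proof -
  have "\<rho> \<in> distr_set" and "optimal_demand (p i) \<rho> (1 / real n) (x i)"
    using pe i unfolding parimutuel_eq_def optimal_demand_def[symmetric] by auto
  then have "p i s * (1 / real n) \<le> dotp (p i) (x i) * \<rho> s"
    using n by (intro optimal_demand_price_bound) (auto simp: distr_set_def)
  with n show ?thesis
    by (simp add: field_simps)
qed

lemma reports_eq_scaled_allocation:
  assumes pe: "parimutuel_eq n p \<rho> x" and n: "1 \<le> n" and i: "i \<in> {1..n}"
    and reports: "\<rho>s i s = \<rho> s * x i s / (\<Sum>s'\<in>UNIV. \<rho> s' * x i s')"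
  shows "\<rho>s i s = real n * \<rho> s * x i s"
  using reports parimutuel_eq_budget_binds[OF pe n i] by (simp add: dotp_def)

lemma pool_reports_eq_prices:
  assumes pe: "parimutuel_eq n p \<rho> x" and n: "1 \<le> n"
    and reports: "\<forall>i\<in>{1..n}. \<forall>s. \<rho>s i s = \<rho> s * x i s / (\<Sum>s'\<in>UNIV. \<rho> s' * x i s')"
  shows "pool n \<rho>s = \<rho>"
proof
  fix s
  have "(\<Sum>j\<in>{1..n}. \<rho>s j s) = (\<Sum>j\<in>{1..n}. real n * \<rho> s * x j s)"
    using reports_eq_scaled_allocation[OF pe n] reports by (intro sum.cong) auto
  also have "\<dots> = real n * \<rho> s"
    using pe by (simp add: parimutuel_eq_def sum_distrib_left[symmetric])
  finally show "pool n \<rho>s s = \<rho> s"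
    unfolding pool_def using n by simp
qed

lemma kkt_of_parimutuel_eq:
  assumes pe: "parimutuel_eq n p \<rho> x" and n: "1 \<le> n" and i: "i \<in> {1..n}" and p: "p i \<in> distr_set"
    and reports: "\<forall>i\<in>{1..n}. \<forall>s. \<rho>s i s = \<rho> s * x i s / (\<Sum>s'\<in>UNIV. \<rho> s' * x i s')"
  shows "p i t \<le> kkt_multiplier n (p i) \<rho>s i * pool n \<rho>s t"
proof -
  have bound: "\<And>s. p i s \<le> real n * dotp (p i) (x i) * \<rho> s"
    using parimutuel_eq_demand_bound[OF pe n i p] .
  have "p i s * \<rho>s i s / \<rho> s = real n * (p i s * x i s)" for s
  proof (cases "\<rho> s = 0")
    case True
    with bound[of s] p have "p i s = 0"
      by (simp add: distr_set_def order_antisym)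
    with True show ?thesis
      by simp
  next
    case False
    have "\<rho>s i s = real n * \<rho> s * x i s"
      using reports i by (intro reports_eq_scaled_allocation[OF pe n i]) blast
    with False show ?thesis
      by simp
  qed
  then have "kkt_multiplier n (p i) \<rho>s i = real n * dotp (p i) (x i)"
    unfolding kkt_multiplier_def pool_reports_eq_prices[OF pe n reports] dotp_def
    by (simp add: sum_distrib_left)
  with bound[of t] show ?thesis
    by (simp add: pool_reports_eq_prices[OF pe n reports])
qed

text \<open>Report \<open>\<rho>s i\<close> read as a bundle of Arrow securities bought at the prices \<open>pool n \<rho>s\<close>
  with wealth \<open>1 / n\<close>: it spends \<open>\<rho>s i s / n\<close> on state \<open>s\<close>. Free securities are split
  equally so that the market clears.\<close>
definition bet_allocation :: "nat \<Rightarrow> (nat \<Rightarrow> 'a::finite \<Rightarrow> real) \<Rightarrow> nat \<Rightarrow> 'a \<Rightarrow> real" where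
  "bet_allocation n \<rho>s i s =
     (if 0 < pool n \<rho>s s then \<rho>s i s / (real n * pool n \<rho>s s) else 1 / real n)"

lemma pool_mult_bet_allocation:
  assumes i: "i \<in> {1..n}" and \<rho>s: "\<forall>j\<in>{1..n}. \<rho>s j \<in> distr_set"
  shows "pool n \<rho>s s * bet_allocation n \<rho>s i s = \<rho>s i s / real n"
proof (cases "0 < pool n \<rho>s s")
  case False
  have "0 \<le> \<rho>s i s / real n" "\<rho>s i s / real n \<le> pool n \<rho>s s"
    using pool_ge[OF i \<rho>s] i \<rho>s by (auto simp: distr_set_def)
  with False have "pool n \<rho>s s = 0" "\<rho>s i s / real n = 0"
    by linarith+
  then show ?thesis
    by (simp add: bet_allocation_def)
qed (use i in \<open>simp add: bet_allocation_def\<close>)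

lemma dotp_pool_bet_allocation:
  assumes i: "i \<in> {1..n}" and \<rho>s: "\<forall>j\<in>{1..n}. \<rho>s j \<in> distr_set"
  shows "dotp (pool n \<rho>s) (bet_allocation n \<rho>s i) = 1 / real n"
  using i \<rho>s unfolding dotp_def pool_mult_bet_allocation[OF i \<rho>s]
  by (simp add: distr_set_def sum_divide_distrib[symmetric])

lemma sum_bet_allocation:
  assumes n: "1 \<le> n"
  shows "(\<Sum>i\<in>{1..n}. bet_allocation n \<rho>s i s) = 1"
proof (cases "0 < pool n \<rho>s s")
  case True
  then have "(\<Sum>i\<in>{1..n}. bet_allocation n \<rho>s i s) = real n * pool n \<rho>s s / (real n * pool n \<rho>s s)"
    by (simp add: bet_allocation_def sum_divide_distrib[symmetric] pool_def)
  with True n show ?thesis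
    by simp
qed (use n in \<open>simp add: bet_allocation_def\<close>)

lemma dotp_bet_allocation:
  assumes n: "1 \<le> n" and \<rho>s: "\<forall>j\<in>{1..n}. \<rho>s j \<in> distr_set"
    and free: "\<And>s. pool n \<rho>s s = 0 \<Longrightarrow> q s = 0"
  shows "dotp q (bet_allocation n \<rho>s i) = kkt_multiplier n q \<rho>s i / real n"
proof -
  have "q s * bet_allocation n \<rho>s i s = q s * \<rho>s i s / pool n \<rho>s s / real n" for s
  proof (cases "0 < pool n \<rho>s s")
    case False
    with pool_in_distr_set[OF n \<rho>s] have "pool n \<rho>s s = 0"
      by (simp add: distr_set_def less_le)
    then show ?thesis
      by (simp add: free)
  qed (simp add: bet_allocation_def field_simps)
  then show ?thesis
    by (simp add: dotp_def kkt_multiplier_def sum_divide_distrib)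
qed

lemma parimutuel_eq_bet_allocation:
  assumes n: "1 \<le> n" and p: "\<forall>i\<in>{1..n}. p i \<in> distr_set" and \<rho>s: "\<forall>i\<in>{1..n}. \<rho>s i \<in> distr_set"
    and kkt: "\<forall>i\<in>{1..n}. \<forall>t. p i t \<le> kkt_multiplier n (p i) \<rho>s i * pool n \<rho>s t"
  shows "parimutuel_eq n p (pool n \<rho>s) (bet_allocation n \<rho>s)"
proof -
  let ?r = "pool n \<rho>s" and ?x = "bet_allocation n \<rho>s"
  have r: "?r \<in> distr_set"
    using n \<rho>s by (rule pool_in_distr_set)
  have x: "0 \<le> ?x i s" if "i \<in> {1..n}" for i s
    using that \<rho>s by (auto simp: bet_allocation_def distr_set_def)
  have "optimal_demand (p i) ?r (1 / real n) (?x i)" if i: "i \<in> {1..n}" for i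
  proof (rule optimal_demand_of_price_bound)
    have "p i s = 0" if "?r s = 0" for s
      using kkt[rule_format, OF i, of s] p i that by (auto simp: distr_set_def order_antisym)
    then have utility: "dotp (p i) (?x i) = kkt_multiplier n (p i) \<rho>s i / real n"
      by (rule dotp_bet_allocation[OF n \<rho>s])
    show "\<forall>s. p i s * (1 / real n) \<le> dotp (p i) (?x i) * ?r s"
      unfolding utility using kkt[rule_format, OF i] n by (simp add: field_simps)
    show "0 \<le> dotp (p i) (?x i)"
      unfolding dotp_def using p x i by (intro sum_nonneg mult_nonneg_nonneg) (auto simp: distr_set_def)
  qed (use n in simp)
  then show ?thesis
    unfolding parimutuel_eq_def optimal_demand_def[symmetric]
    using r x dotp_pool_bet_allocation[OF _ \<rho>s] sum_bet_allocation[OF n] by auto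
qed

lemma reports_eq_bet_allocation:
  assumes i: "i \<in> {1..n}" and \<rho>s: "\<forall>j\<in>{1..n}. \<rho>s j \<in> distr_set"
  shows "\<rho>s i s = pool n \<rho>s s * bet_allocation n \<rho>s i s
    / (\<Sum>s'\<in>UNIV. pool n \<rho>s s' * bet_allocation n \<rho>s i s')"
  using dotp_pool_bet_allocation[OF i \<rho>s] i
  by (simp add: dotp_def pool_mult_bet_allocation[OF i \<rho>s])

theorem proposition3:
  fixes n :: nat and p :: "nat \<Rightarrow> 'a::finite \<Rightarrow> real" and \<rho>s :: "nat \<Rightarrow> 'a \<Rightarrow> real"
  assumes "n \<ge> 1"
    and "\<forall>i\<in>{1..n}. p i \<in> distr_set"
    and "\<forall>i\<in>{1..n}. \<rho>s i \<in> distr_set"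
  shows "(nash_eq n p \<rho>s \<longleftrightarrow>
           (\<exists>\<rho> x. parimutuel_eq n p \<rho> x \<and>
              (\<forall>i\<in>{1..n}. \<forall>s. \<rho>s i s = \<rho> s * x i s / (\<Sum>s'\<in>UNIV. \<rho> s' * x i s'))))
      \<and> (\<forall>\<rho> x. nash_eq n p \<rho>s \<and> parimutuel_eq n p \<rho> x \<and>
              (\<forall>i\<in>{1..n}. \<forall>s. \<rho>s i s = \<rho> s * x i s / (\<Sum>s'\<in>UNIV. \<rho> s' * x i s'))
            \<longrightarrow> pool n \<rho>s = \<rho>)"
proof (intro conjI allI impI iffI)
  assume "nash_eq n p \<rho>s"
  then have "\<forall>i\<in>{1..n}. \<forall>t. p i t \<le> kkt_multiplier n (p i) \<rho>s i * pool n \<rho>s t"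
    using nash_eq_iff_kkt[OF assms(2,3)] by blast
  then show "\<exists>\<rho> x. parimutuel_eq n p \<rho> x \<and>
      (\<forall>i\<in>{1..n}. \<forall>s. \<rho>s i s = \<rho> s * x i s / (\<Sum>s'\<in>UNIV. \<rho> s' * x i s'))"
    using parimutuel_eq_bet_allocation[OF assms] reports_eq_bet_allocation[OF _ assms(3)] by blast
next
  assume "\<exists>\<rho> x. parimutuel_eq n p \<rho> x \<and>
      (\<forall>i\<in>{1..n}. \<forall>s. \<rho>s i s = \<rho> s * x i s / (\<Sum>s'\<in>UNIV. \<rho> s' * x i s'))"
  then have "\<forall>i\<in>{1..n}. \<forall>t. p i t \<le> kkt_multiplier n (p i) \<rho>s i * pool n \<rho>s t"
    using kkt_of_parimutuel_eq[OF _ assms(1)] assms(2) by blast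
  then show "nash_eq n p \<rho>s"
    using nash_eq_iff_kkt[OF assms(2,3)] by blast
next
  fix \<rho> x
  assume "nash_eq n p \<rho>s \<and> parimutuel_eq n p \<rho> x \<and>
      (\<forall>i\<in>{1..n}. \<forall>s. \<rho>s i s = \<rho> s * x i s / (\<Sum>s'\<in>UNIV. \<rho> s' * x i s'))"
  then show "pool n \<rho>s = \<rho>"
    using pool_reports_eq_prices[OF _ assms(1)] by blast
qed

end
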